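(* Fix $1<p<\infty$. Let $\Omega$ be a probability space and let $D_Y,D_X,E_Y,E_X:\Omega\to\mathbb{R}$, $\lambda,\Theta>0$, and $a,b,\nu,\mu\in(0,1)$ be such that (i) $D_Y,D_X,E_Y,E_X$ are non-negative measurable functions with $D_Y\le E_Y$, $D_X\le E_X$, $D_Y\le\lambda^pD_X$, $E_Y\le\lambda^pE_X$, $D_Y\le(1+\nu)\Theta^pE_X$; (ii) $\mathbb{E}D_Y>(1-\nu)\Theta^p\mathbb{E}E_X$, $\mathbb{E}D_Y>(1-\mu)\mathbb{E}E_Y$, $\mathbb{E}D_X>(1-\mu)\mathbb{E}E_X$; (iii) $\lambda^p\bigl(\frac{2\mu}{a}+\frac{2\nu}{b}\bigr)<\Theta^p(1-\nu)$. Then there exists $\omega\in\Omega$ such that $D_Y(\omega)>(1-a)E_Y(\omega)$, $D_X(\omega)>(1-a)E_X(\omega)$, and $D_Y(\omega)>(1-b)\Theta^pE_X(\omega)$.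
   Context: $\mathbb{E}$ denotes expectation on the probability space $\Omega$. *)

theory Defs
  imports "HOL-Probability.Probability"
begin

end

theory Submission
  imports Defs
begin

text \<open>
  Write \<open>L = \<lambda>\<^sup>p\<close>, \<open>T = \<Theta>\<^sup>p\<close>; the defects \<open>E\<^sub>Y - D\<^sub>Y\<close>, \<open>E\<^sub>X - D\<^sub>X\<close> and
  \<open>(1 + \<nu>) T E\<^sub>X - D\<^sub>Y\<close> are non-negative. If at some point one of the three conclusions
  fails, the corresponding defect, scaled by \<open>1/a\<close>, \<open>L/a\<close> resp. \<open>L/(b T)\<close>, alone
  dominates \<open>D\<^sub>Y \<le> L E\<^sub>X\<close>. So if they failed everywhere, \<open>D\<^sub>Y\<close> would be bounded pointwise
  by the sum of the scaled defects. Taking expectations, hypothesis (ii) bounds that sum by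
  \<open>L (2\<mu>/a + 2\<nu>/b) E[E\<^sub>X]\<close>, which by (iii) is below \<open>(1 - \<nu>) T E[E\<^sub>X] < E[D\<^sub>Y]\<close>.
\<close>

lemma ennreal_mult_less_imp_less_top:
  assumes "0 < c" "ennreal c * x < y"
  shows "x < \<infinity>"
  using assms by (cases "x = \<infinity>") (auto simp: ennreal_mult_top top.not_eq_extremum)

lemma integrable_nonneg_le_mult:
  fixes f g :: "'a \<Rightarrow> real"
  assumes "integrable M g" "f \<in> borel_measurable M"
    and "\<And>w. w \<in> space M \<Longrightarrow> 0 \<le> f w" "\<And>w. w \<in> space M \<Longrightarrow> f w \<le> c * g w"
  shows "integrable M f"
proof (rule Bochner_Integration.integrable_bound)
  show "integrable M (\<lambda>w. c * g w)" using assms(1) by simp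
  show "AE w in M. norm (f w) \<le> norm (c * g w)"
    using assms(3,4) by (intro AE_I2) force
qed (fact assms(2))

lemma nn_integral_mult_less_iff_integral:
  fixes f g :: "'a \<Rightarrow> real"
  assumes "integrable M f" "integrable M g" "0 \<le> c"
    and "\<And>w. w \<in> space M \<Longrightarrow> 0 \<le> f w" "\<And>w. w \<in> space M \<Longrightarrow> 0 \<le> g w"
  shows "ennreal c * (\<integral>\<^sup>+ w. ennreal (g w) \<partial>M) < (\<integral>\<^sup>+ w. ennreal (f w) \<partial>M)
    \<longleftrightarrow> c * integral\<^sup>L M g < integral\<^sup>L M f"
proof -
  have "0 \<le> c * integral\<^sup>L M g"
    using assms(3,5) by (simp add: integral_nonneg)
  then show ?thesis
    using assms by (simp add: nn_integral_eq_integral ennreal_mult'[symmetric] ennreal_less_iff)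
qed

lemma le_sum_of_defects_if_one_fails:
  fixes dy dx ey ex L T a b \<nu> :: real
  assumes "0 < a" "0 < b" "0 < L" "0 < T" "0 \<le> \<nu>" "0 \<le> ex"
    and "dy \<le> ey" "dx \<le> ex" "dy \<le> L * dx" "dy \<le> (1 + \<nu>) * T * ex"
    and fails: "dy \<le> (1 - a) * ey \<or> dx \<le> (1 - a) * ex \<or> dy \<le> (1 - b) * T * ex"
  shows "dy \<le> (ey - dy) / a + L * (ex - dx) / a + L * ((1 + \<nu>) * T * ex - dy) / (b * T)"
proof -
  have Y: "0 \<le> (ey - dy) / a" and X: "0 \<le> L * (ex - dx) / a"
    and XT: "0 \<le> L * ((1 + \<nu>) * T * ex - dy) / (b * T)"
    using assms(1-4,7,8,10) by simp_all
  have "L * dx \<le> L * ex"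
    using assms(3,8) by simp
  with assms(9) have dy_le: "dy \<le> L * ex" by linarith
  from fails consider "dy \<le> (1 - a) * ey" | "dx \<le> (1 - a) * ex" | "dy \<le> (1 - b) * T * ex"
    by blast
  then show ?thesis
  proof cases
    case 1
    have "a * dy \<le> a * ey"
      using assms(1,7) by simp
    with 1 have "a * dy \<le> ey - dy"
      by (simp add: algebra_simps)
    then have "dy \<le> (ey - dy) / a"
      using assms(1) by (simp add: field_simps)
    with X XT show ?thesis by linarith
  next
    case 2
    then have "L * (a * ex) \<le> L * (ex - dx)"
      using assms(3) by (intro mult_left_mono) (auto simp: algebra_simps)
    then have "L * ex \<le> L * (ex - dx) / a"
      using assms(1) by (simp add: field_simps)
    with Y XT dy_le show ?thesis by linarith
  next
    case 3
    have "0 \<le> \<nu> * T * ex" using assms(4-6) by simp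
    with 3 have "L * (b * T * ex) \<le> L * ((1 + \<nu>) * T * ex - dy)"
      using assms(3) by (intro mult_left_mono) (auto simp: algebra_simps)
    then have "L * ex \<le> L * ((1 + \<nu>) * T * ex - dy) / (b * T)"
      using assms(2,4) by (simp add: field_simps)
    with Y X dy_le show ?thesis by linarith
  qed
qed

lemma sum_of_defects_less:
  fixes dy dx ey ex L T a b \<nu> \<mu> :: real
  assumes "0 < a" "0 < b" "0 < L" "0 < T" "0 \<le> \<mu>" "0 \<le> ex"
    and "(1 - \<nu>) * T * ex < dy" "(1 - \<mu>) * ey < dy" "(1 - \<mu>) * ex < dx" "ey \<le> L * ex"
    and "L * (2 * \<mu> / a + 2 * \<nu> / b) < T * (1 - \<nu>)"
  shows "(ey - dy) / a + L * (ex - dx) / a + L * ((1 + \<nu>) * T * ex - dy) / (b * T) < dy"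
proof -
  have "(ey - dy) / a < \<mu> * ey / a"
    using assms(1,8) by (simp add: divide_strict_right_mono algebra_simps)
  also have "\<dots> \<le> \<mu> * (L * ex) / a"
    using assms(1,5,10) by (simp add: divide_right_mono mult_left_mono)
  finally have Y: "(ey - dy) / a < L * \<mu> * ex / a" by (simp add: mult_ac)
  have "L * (ex - dx) \<le> L * (\<mu> * ex)"
    using assms(3,9) by (intro mult_left_mono) (auto simp: algebra_simps)
  then have X: "L * (ex - dx) / a \<le> L * \<mu> * ex / a"
    using assms(1) by (simp add: divide_right_mono)
  have "L * ((1 + \<nu>) * T * ex - dy) \<le> L * (2 * \<nu> * T * ex)"
    using assms(3,7) by (intro mult_left_mono) (auto simp: algebra_simps)
  then have "L * ((1 + \<nu>) * T * ex - dy) / (b * T) \<le> L * (2 * \<nu> * T * ex) / (b * T)"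
    by (rule divide_right_mono) (use assms(2,4) in simp)
  also have "\<dots> = L * 2 * \<nu> * ex / b"
    using assms(4) by simp
  finally have XT: "L * ((1 + \<nu>) * T * ex - dy) / (b * T) \<le> L * 2 * \<nu> * ex / b" .
  have "L * \<mu> * ex / a + L * \<mu> * ex / a + L * 2 * \<nu> * ex / b
      = L * (2 * \<mu> / a + 2 * \<nu> / b) * ex"
    by (simp add: field_simps)
  also have "\<dots> \<le> T * (1 - \<nu>) * ex"
    using assms(6,11) by (intro mult_right_mono) auto
  also have "\<dots> < dy"
    using assms(7) by (simp add: algebra_simps)
  finally show ?thesis
    using Y X XT by linarith
qed

lemma exists_point_with_small_defects:
  fixes M :: "'a measure" and D_Y D_X E_Y E_X :: "'a \<Rightarrow> real" and L T a b \<nu> \<mu> :: real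
  assumes "integrable M D_Y" "integrable M D_X" "integrable M E_Y" "integrable M E_X"
    and "0 < a" "0 < b" "0 < L" "0 < T" "0 \<le> \<nu>" "0 \<le> \<mu>"
    and "\<And>w. w \<in> space M \<Longrightarrow> 0 \<le> E_X w"
        "\<And>w. w \<in> space M \<Longrightarrow> D_Y w \<le> E_Y w"
        "\<And>w. w \<in> space M \<Longrightarrow> D_X w \<le> E_X w"
        "\<And>w. w \<in> space M \<Longrightarrow> D_Y w \<le> L * D_X w"
        "\<And>w. w \<in> space M \<Longrightarrow> E_Y w \<le> L * E_X w"
        "\<And>w. w \<in> space M \<Longrightarrow> D_Y w \<le> (1 + \<nu>) * T * E_X w"
    and "(1 - \<nu>) * T * integral\<^sup>L M E_X < integral\<^sup>L M D_Y"
        "(1 - \<mu>) * integral\<^sup>L M E_Y < integral\<^sup>L M D_Y"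
        "(1 - \<mu>) * integral\<^sup>L M E_X < integral\<^sup>L M D_X"
    and "L * (2 * \<mu> / a + 2 * \<nu> / b) < T * (1 - \<nu>)"
  shows "\<exists>w\<in>space M. D_Y w > (1 - a) * E_Y w \<and> D_X w > (1 - a) * E_X w
           \<and> D_Y w > (1 - b) * T * E_X w"
proof (rule ccontr)
  assume "\<not> ?thesis"
  then have "D_Y w \<le> (E_Y w - D_Y w) / a + L * (E_X w - D_X w) / a
      + L * ((1 + \<nu>) * T * E_X w - D_Y w) / (b * T)" if "w \<in> space M" for w
    using that assms(5-9,11-16) by (intro le_sum_of_defects_if_one_fails) auto
  then have "integral\<^sup>L M D_Y \<le> integral\<^sup>L M (\<lambda>w. (E_Y w - D_Y w) / a
      + L * (E_X w - D_X w) / a + L * ((1 + \<nu>) * T * E_X w - D_Y w) / (b * T))"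
    using assms(1-4) by (intro integral_mono) auto
  also have "\<dots> = (integral\<^sup>L M E_Y - integral\<^sup>L M D_Y) / a
      + L * (integral\<^sup>L M E_X - integral\<^sup>L M D_X) / a
      + L * ((1 + \<nu>) * T * integral\<^sup>L M E_X - integral\<^sup>L M D_Y) / (b * T)"
    using assms(1-4) by simp
  also have "\<dots> < integral\<^sup>L M D_Y"
  proof (rule sum_of_defects_less[where \<mu> = \<mu>])
    show "0 \<le> integral\<^sup>L M E_X"
      using assms(11) by (simp add: integral_nonneg)
    have "integral\<^sup>L M E_Y \<le> integral\<^sup>L M (\<lambda>w. L * E_X w)"
      using assms(3,4,15) by (intro integral_mono) auto
    then show "integral\<^sup>L M E_Y \<le> L * integral\<^sup>L M E_X" by simp
  qed (use assms(5-8,10,17-20) in auto)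
  finally show False by simp
qed

theorem lemma3p2:
  fixes M :: "'a measure"
    and D_Y D_X E_Y E_X :: "'a \<Rightarrow> real"
    and p lam Th a b \<nu> \<mu> :: real
  assumes "prob_space M"
    and "1 < p"
    and "lam > 0" and "Th > 0"
    and "0 < a" "a < 1" "0 < b" "b < 1" "0 < \<nu>" "\<nu> < 1" "0 < \<mu>" "\<mu> < 1"
    and "D_Y \<in> borel_measurable M" "D_X \<in> borel_measurable M"
        "E_Y \<in> borel_measurable M" "E_X \<in> borel_measurable M"
    and "\<And>w. w \<in> space M \<Longrightarrow> 0 \<le> D_Y w"
        "\<And>w. w \<in> space M \<Longrightarrow> 0 \<le> D_X w"
        "\<And>w. w \<in> space M \<Longrightarrow> 0 \<le> E_Y w"
        "\<And>w. w \<in> space M \<Longrightarrow> 0 \<le> E_X w"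
    and "\<And>w. w \<in> space M \<Longrightarrow> D_Y w \<le> E_Y w"
        "\<And>w. w \<in> space M \<Longrightarrow> D_X w \<le> E_X w"
        "\<And>w. w \<in> space M \<Longrightarrow> D_Y w \<le> lam powr p * D_X w"
        "\<And>w. w \<in> space M \<Longrightarrow> E_Y w \<le> lam powr p * E_X w"
        "\<And>w. w \<in> space M \<Longrightarrow> D_Y w \<le> (1 + \<nu>) * Th powr p * E_X w"
    and "(\<integral>\<^sup>+ w. ennreal (D_Y w) \<partial>M) > ennreal ((1 - \<nu>) * Th powr p) * (\<integral>\<^sup>+ w. ennreal (E_X w) \<partial>M)"
        "(\<integral>\<^sup>+ w. ennreal (D_Y w) \<partial>M) > ennreal (1 - \<mu>) * (\<integral>\<^sup>+ w. ennreal (E_Y w) \<partial>M)"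
        "(\<integral>\<^sup>+ w. ennreal (D_X w) \<partial>M) > ennreal (1 - \<mu>) * (\<integral>\<^sup>+ w. ennreal (E_X w) \<partial>M)"
    and "lam powr p * (2 * \<mu> / a + 2 * \<nu> / b) < Th powr p * (1 - \<nu>)"
  shows "\<exists>w\<in>space M. D_Y w > (1 - a) * E_Y w \<and> D_X w > (1 - a) * E_X w
              \<and> D_Y w > (1 - b) * Th powr p * E_X w"
proof -
  have "(\<integral>\<^sup>+ w. ennreal (E_X w) \<partial>M) < \<infinity>"
    using assms(4,10,26) by (intro ennreal_mult_less_imp_less_top) auto
  then have E_X: "integrable M E_X"
    using assms(16,20) by (intro integrableI_nonneg AE_I2) auto
  have D_Y: "integrable M D_Y"
    using E_X assms(13,17,25) by (rule integrable_nonneg_le_mult)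
  have E_Y: "integrable M E_Y"
    using E_X assms(15,19,24) by (rule integrable_nonneg_le_mult)
  have D_X: "integrable M D_X"
    by (rule integrable_nonneg_le_mult[OF E_X assms(14,18), where c = 1]) (use assms(22) in auto)
  have D_Y_E_X: "(1 - \<nu>) * Th powr p * integral\<^sup>L M E_X < integral\<^sup>L M D_Y"
    using assms(10,26) nn_integral_mult_less_iff_integral[OF D_Y E_X] assms(17,20) by simp
  have D_Y_E_Y: "(1 - \<mu>) * integral\<^sup>L M E_Y < integral\<^sup>L M D_Y"
    using assms(12,27) nn_integral_mult_less_iff_integral[OF D_Y E_Y] assms(17,19) by simp
  have D_X_E_X: "(1 - \<mu>) * integral\<^sup>L M E_X < integral\<^sup>L M D_X"
    using assms(12,28) nn_integral_mult_less_iff_integral[OF D_X E_X] assms(18,20) by simp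
  show ?thesis
    by (rule exists_point_with_small_defects[OF D_Y D_X E_Y E_X _ _ _ _ _ _
          assms(20-25) D_Y_E_X D_Y_E_Y D_X_E_X assms(29)])
      (use assms(3-5,7,9,11) in auto)
qed

end
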